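(* Let $(X,d,\preccurlyeq)$ be a preordered $s$-regular $b$-metric space, let $x_0\in X$, and let $\mathcal{F}=\{f_\alpha\}_{\alpha\in\mathcal{I}}$ ($\mathcal I$ nonempty) be a concordantly isotone family of self mappings of $X$ with $f_\alpha(x_0)\succcurlyeq x_0$ for all $\alpha\in\mathcal{I}$. Suppose that for every chain $C\in\mathcal{C}^*_1(x_0,\mathcal{F},\preccurlyeq)$ there exists $w\in X$ which is a common upper bound of the chains $f_\alpha(C)$, $\alpha\in\mathcal{I}$, and there exist $z\in X$ and $\beta\in\mathcal{I}$ such that for all $\alpha\in\mathcal{I}$ and all $i\in\mathbb{N}$, $f_\alpha(w)\succcurlyeq w\succcurlyeq f_\beta^i(z)$, and $d(f_\alpha^i(w),f_\beta^i(z))\to 0$ as $i\to\infty$ for all $\alpha\in\mathcal I$. Then the set $\mathrm{ComFix}(\mathcal{F})\cap O^*_X(x_0)$ is nonempty and contains a maximal element.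
   Context: A $b$-metric space with coefficient $s\ge 1$ is a nonempty set $X$ with $d:X\times X\to[0,\infty)$ such that for all $x,y,z$: $d(x,y)=0$ iff $x=y$; $d(x,y)=d(y,x)$; $d(x,y)\le s[d(x,z)+d(z,y)]$. A preorder is a reflexive transitive relation $\preccurlyeq$; $x\succcurlyeq y$ means $y\preccurlyeq x$; $x\prec y$ means $x\preccurlyeq y$ and $x\ne y$. A preordered $s$-regular $b$-metric space $(X,d,\preccurlyeq)$ is a $b$-metric space with coefficient $s$ with a preorder such that $x\preccurlyeq y\preccurlyeq z$ implies $\max\{d(x,y),d(y,z)\}\le s^2d(x,z)$. A chain is a subset any two elements of which are comparable. $f^i$ is the $i$-th iterate. A family $\mathcal{F}=\{f_\alpha\}_{\alpha\in\mathcal I}$ of self maps is concordantly isotone if for all $x,y\in X$, $x\prec y$ implies $f_\alpha(x)\preccurlyeq f_\beta(y)$ for all $\alpha,\beta\in\mathcal{I}$. $O^*_X(x_0)=\{x:x\succcurlyeq x_0\}$. $\mathcal{C}^*_1(\mathcal F,\preccurlyeq)$ is the set of chains $C\subset\bigcup_{\alpha}f_\alpha(X)$ such that $f_\alpha(x)\succcurlyeq x$ for all $x\in C,\alpha\in\mathcal I$, and for all $x,y\in C$, $x\prec y$ implies $f_\alpha(x)\preccurlyeq y$ for all $\alpha$. $\mathcal{C}^*_1(x_0,\mathcal F,\preccurlyeq)=\{C\in\mathcal C^*_1(\mathcal F,\preccurlyeq): C\subset O^*_X(x_0)\cap\bigcup_\alpha f_\alpha(O^*_X(x_0))\}$. $\mathrm{ComFix}(\mathcal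 F)=\{x: f_\alpha(x)=x\ \forall\alpha\}$. A common upper bound of the sets $f_\alpha(C)$ is $w$ with $f_\alpha(x)\preccurlyeq w$ for all $x\in C$, $\alpha\in\mathcal I$. A maximal element of $A$ is $w\in A$ with no $u\in A$ such that $w\prec u$. *)

theory Defs
  imports "HOL-Analysis.Analysis"
begin

text \<open>The underlying set X is the whole type 'a (nonempty by construction).\<close>

definition b_metric :: "('a \<Rightarrow> 'a \<Rightarrow> real) \<Rightarrow> real \<Rightarrow> bool" where
  "b_metric d s \<longleftrightarrow> s \<ge> 1 \<and>
     (\<forall>x y. d x y \<ge> 0) \<and>
     (\<forall>x y. d x y = 0 \<longleftrightarrow> x = y) \<and>
     (\<forall>x y. d x y = d y x) \<and>
     (\<forall>x y z. d x y \<le> s * (d x z + d z y))"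

definition is_preorder :: "('a \<Rightarrow> 'a \<Rightarrow> bool) \<Rightarrow> bool" where
  "is_preorder le \<longleftrightarrow> reflp le \<and> transp le"

definition strict_of :: "('a \<Rightarrow> 'a \<Rightarrow> bool) \<Rightarrow> 'a \<Rightarrow> 'a \<Rightarrow> bool" where
  "strict_of le x y \<longleftrightarrow> le x y \<and> x \<noteq> y"

definition preordered_s_regular_b_metric ::
    "('a \<Rightarrow> 'a \<Rightarrow> real) \<Rightarrow> real \<Rightarrow> ('a \<Rightarrow> 'a \<Rightarrow> bool) \<Rightarrow> bool" where
  "preordered_s_regular_b_metric d s le \<longleftrightarrow> b_metric d s \<and> is_preorder le \<and>
     (\<forall>x y z. le x y \<and> le y z \<longrightarrow> max (d x y) (d y z) \<le> s\<^sup>2 * d x z)"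

definition is_chain :: "('a \<Rightarrow> 'a \<Rightarrow> bool) \<Rightarrow> 'a set \<Rightarrow> bool" where
  "is_chain le C \<longleftrightarrow> (\<forall>x\<in>C. \<forall>y\<in>C. le x y \<or> le y x)"

definition concordantly_isotone ::
    "('a \<Rightarrow> 'a \<Rightarrow> bool) \<Rightarrow> 'i set \<Rightarrow> ('i \<Rightarrow> 'a \<Rightarrow> 'a) \<Rightarrow> bool" where
  "concordantly_isotone le I f \<longleftrightarrow>
     (\<forall>x y. strict_of le x y \<longrightarrow> (\<forall>\<alpha>\<in>I. \<forall>\<beta>\<in>I. le (f \<alpha> x) (f \<beta> y)))"

definition upper_orbit :: "('a \<Rightarrow> 'a \<Rightarrow> bool) \<Rightarrow> 'a \<Rightarrow> 'a set" where
  "upper_orbit le x0 = {x. le x0 x}"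

definition C1star :: "('a \<Rightarrow> 'a \<Rightarrow> bool) \<Rightarrow> 'i set \<Rightarrow> ('i \<Rightarrow> 'a \<Rightarrow> 'a) \<Rightarrow> 'a set set" where
  "C1star le I f = {C. is_chain le C \<and> C \<subseteq> (\<Union>\<alpha>\<in>I. range (f \<alpha>)) \<and>
       (\<forall>x\<in>C. \<forall>\<alpha>\<in>I. le x (f \<alpha> x)) \<and>
       (\<forall>x\<in>C. \<forall>y\<in>C. strict_of le x y \<longrightarrow> (\<forall>\<alpha>\<in>I. le (f \<alpha> x) y))}"

definition C1star_at ::
    "'a \<Rightarrow> ('a \<Rightarrow> 'a \<Rightarrow> bool) \<Rightarrow> 'i set \<Rightarrow> ('i \<Rightarrow> 'a \<Rightarrow> 'a) \<Rightarrow> 'a set set" where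
  "C1star_at x0 le I f = {C \<in> C1star le I f.
      C \<subseteq> upper_orbit le x0 \<inter> (\<Union>\<alpha>\<in>I. f \<alpha> ` upper_orbit le x0)}"

definition ComFix :: "'i set \<Rightarrow> ('i \<Rightarrow> 'a \<Rightarrow> 'a) \<Rightarrow> 'a set" where
  "ComFix I f = {x. \<forall>\<alpha>\<in>I. f \<alpha> x = x}"

definition maximal_in :: "('a \<Rightarrow> 'a \<Rightarrow> bool) \<Rightarrow> 'a \<Rightarrow> 'a set \<Rightarrow> bool" where
  "maximal_in le w A \<longleftrightarrow> w \<in> A \<and> \<not> (\<exists>u\<in>A. strict_of le w u)"

end

theory Submission
  imports Defs
begin

text \<open>
  Regularity, applied to w \<le> f_\<alpha>(w) \<le> f_\<alpha>^i(w) and to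
  f_\<beta>^i(z) \<le> w \<le> f_\<alpha>^i(w), gives d(w, f_\<alpha>(w)) \<le> s^4 d(f_\<alpha>^i(w), f_\<beta>^i(z)) \<rightarrow> 0,
  so w is a common fixed point. Regularity also makes the preorder antisymmetric, and every
  chain of common fixed points above x0 lies in C1star_at x0, so Zorn's lemma yields a maximal
  common fixed point; the chain {f_\<gamma>(x0)} in C1star_at x0 shows that there is one to begin with.
\<close>

lemma iterates_increasing:
  assumes "is_preorder le"
    and mono: "\<And>x y. strict_of le x y \<Longrightarrow> le (g x) (g y)"
    and w: "le w (g w)"
    and "i \<le> j"
  shows "le ((g ^^ i) w) ((g ^^ j) w)"
proof -
  have refl: "le x x" for x
    using assms(1) by (simp add: is_preorder_def reflp_def)
  have le_Suc: "le ((g ^^ k) w) ((g ^^ Suc k) w)" for k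
  proof (induction k)
    case 0
    show ?case using w by simp
  next
    case (Suc k)
    show ?case
    proof (cases "(g ^^ k) w = (g ^^ Suc k) w")
      case True
      then show ?thesis by (simp add: refl)
    next
      case False
      with Suc have "strict_of le ((g ^^ k) w) ((g ^^ Suc k) w)"
        by (simp add: strict_of_def)
      then show ?thesis using mono by simp
    qed
  qed
  from \<open>i \<le> j\<close> show ?thesis
  proof (induction j rule: dec_induct)
    case base
    show ?case by (rule refl)
  next
    case (step k)
    then show ?case
      using le_Suc assms(1)
      by (metis is_preorder_def transpD)
  qed
qed

lemma maximal_in_exists_Zorn:
  assumes "is_preorder le"
    and antisym: "antisymp_on A le"
    and "A \<noteq> {}"
    and chain_bound: "\<And>D. D \<subseteq> A \<Longrightarrow> is_chain le D \<Longrightarrow> D \<noteq> {} \<Longrightarrow> \<exists>u\<in>A. \<forall>x\<in>D. le x u"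
  shows "\<exists>w. maximal_in le w A"
proof -
  have "\<exists>m\<in>A. \<forall>a\<in>A. le m a \<longrightarrow> a = m"
  proof (rule predicate_Zorn)
    show "partial_order_on A (relation_of le A)"
      using assms(1) antisym
      unfolding antisymp_on_def partial_order_on_def preorder_on_def refl_on_def trans_def antisym_def
        relation_of_def is_preorder_def reflp_def transp_def
      by blast
  next
    fix D
    assume "D \<in> Chains (relation_of le A)"
    then have "D \<subseteq> A" and "is_chain le D"
      unfolding Chains_def relation_of_def is_chain_def by blast+
    then show "\<exists>u\<in>A. \<forall>x\<in>D. le x u"
      using chain_bound \<open>A \<noteq> {}\<close> by (cases "D = {}") auto
  qed
  then show ?thesis
    unfolding maximal_in_def strict_of_def by blast
qed

lemma chain_of_common_fixed_points_in_C1star_at: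
  assumes "reflp le" and "I \<noteq> {}"
    and "is_chain le D" and D: "D \<subseteq> ComFix I f \<inter> upper_orbit le x0"
  shows "D \<in> C1star_at x0 le I f"
proof -
  obtain \<gamma> where "\<gamma> \<in> I" using \<open>I \<noteq> {}\<close> by blast
  have fixed: "f \<alpha> x = x" if "x \<in> D" "\<alpha> \<in> I" for x \<alpha>
    using that D by (auto simp: ComFix_def)
  have "x \<in> f \<gamma> ` upper_orbit le x0" if "x \<in> D" for x
    using fixed[OF that \<open>\<gamma> \<in> I\<close>] that D by (metis IntE image_eqI subsetD)
  then have "D \<subseteq> upper_orbit le x0 \<inter> (\<Union>\<alpha>\<in>I. f \<alpha> ` upper_orbit le x0)"
    using D \<open>\<gamma> \<in> I\<close> by blast
  moreover have "D \<subseteq> (\<Union>\<alpha>\<in>I. range (f \<alpha>))"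
    using calculation by blast
  moreover have "le x (f \<alpha> x)" if "x \<in> D" "\<alpha> \<in> I" for x \<alpha>
    using fixed[OF that] \<open>reflp le\<close> by (simp add: reflpD)
  moreover have "le (f \<alpha> x) y" if "x \<in> D" "\<alpha> \<in> I" "strict_of le x y" for x y \<alpha>
    using fixed[OF that(1,2)] that(3) by (simp add: strict_of_def)
  ultimately show ?thesis
    using \<open>is_chain le D\<close> by (simp add: C1star_at_def C1star_def)
qed

lemma singleton_in_C1star_at:
  assumes "reflp le"
    and iso: "concordantly_isotone le I f"
    and x0: "\<forall>\<alpha>\<in>I. le x0 (f \<alpha> x0)"
    and "\<gamma> \<in> I"
  shows "{f \<gamma> x0} \<in> C1star_at x0 le I f"
proof -
  have "le (f \<gamma> x0) (f \<alpha> (f \<gamma> x0))" if "\<alpha> \<in> I" for \<alpha>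
  proof (cases "x0 = f \<gamma> x0")
    case True
    then show ?thesis using x0 that by metis
  next
    case False
    then have "strict_of le x0 (f \<gamma> x0)"
      using x0 \<open>\<gamma> \<in> I\<close> by (simp add: strict_of_def)
    then show ?thesis
      using iso that \<open>\<gamma> \<in> I\<close> unfolding concordantly_isotone_def by blast
  qed
  moreover have "f \<gamma> x0 \<in> f \<gamma> ` upper_orbit le x0"
    using \<open>reflp le\<close> by (simp add: upper_orbit_def reflpD)
  ultimately show ?thesis
    using assms
    unfolding C1star_at_def C1star_def is_chain_def upper_orbit_def strict_of_def reflp_def
    by auto
qed

lemma maximal_common_fixed_point_exists:
  assumes "is_preorder le" and "antisymp le" and "I \<noteq> {}"
    and iso: "concordantly_isotone le I f"
    and x0: "\<forall>\<alpha>\<in>I. le x0 (f \<alpha> x0)"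
    and bound: "\<And>C. C \<in> C1star_at x0 le I f \<Longrightarrow> \<exists>w\<in>ComFix I f. \<forall>\<alpha>\<in>I. \<forall>x\<in>C. le (f \<alpha> x) w"
  shows "ComFix I f \<inter> upper_orbit le x0 \<noteq> {} \<and>
    (\<exists>w. maximal_in le w (ComFix I f \<inter> upper_orbit le x0))"
proof -
  let ?A = "ComFix I f \<inter> upper_orbit le x0"
  have "reflp le" and trans: "\<And>x y z. le x y \<Longrightarrow> le y z \<Longrightarrow> le x z"
    using \<open>is_preorder le\<close> by (auto simp: is_preorder_def dest: transpD)
  obtain \<gamma> where "\<gamma> \<in> I" using \<open>I \<noteq> {}\<close> by blast
  note singleton = singleton_in_C1star_at[OF \<open>reflp le\<close> iso x0 \<open>\<gamma> \<in> I\<close>]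
  obtain p where "p \<in> ComFix I f" and p: "le (f \<gamma> (f \<gamma> x0)) p"
    using bound[OF singleton] \<open>\<gamma> \<in> I\<close> by blast
  moreover have "le x0 p"
  proof (rule trans[OF _ trans[OF _ p]])
    show "le x0 (f \<gamma> x0)" using x0 \<open>\<gamma> \<in> I\<close> by blast
    show "le (f \<gamma> x0) (f \<gamma> (f \<gamma> x0))"
      using singleton \<open>\<gamma> \<in> I\<close> by (simp add: C1star_at_def C1star_def)
  qed
  ultimately have "p \<in> ?A" by (simp add: upper_orbit_def)
  have "\<exists>w. maximal_in le w ?A"
  proof (rule maximal_in_exists_Zorn[OF \<open>is_preorder le\<close>])
    show "antisymp_on ?A le"
      using \<open>antisymp le\<close> antisymp_on_subset by blast
    show "?A \<noteq> {}" using \<open>p \<in> ?A\<close> by blast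
    fix D
    assume D: "D \<subseteq> ?A" "is_chain le D" "D \<noteq> {}"
    obtain u where "u \<in> ComFix I f" and u: "\<forall>x\<in>D. le (f \<gamma> x) u"
      using bound[OF chain_of_common_fixed_points_in_C1star_at[OF \<open>reflp le\<close> \<open>I \<noteq> {}\<close> D(2,1)]]
        \<open>\<gamma> \<in> I\<close> by blast
    have le_u: "le x u" if "x \<in> D" for x
    proof -
      have "f \<gamma> x = x"
        using D(1) that \<open>\<gamma> \<in> I\<close> by (auto simp: ComFix_def)
      then show ?thesis using u that by metis
    qed
    obtain e where "e \<in> D" using D(3) by blast
    then have "le x0 e" using D(1) by (auto simp: upper_orbit_def)
    then have "le x0 u" using le_u[OF \<open>e \<in> D\<close>] by (rule trans)
    with \<open>u \<in> ComFix I f\<close> le_u show "\<exists>u\<in>?A. \<forall>x\<in>D. le x u"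
      by (auto simp: upper_orbit_def)
  qed
  with \<open>p \<in> ?A\<close> show ?thesis by blast
qed

locale s_regular_b_metric_space =
  fixes d :: "'a \<Rightarrow> 'a \<Rightarrow> real" and s :: real and le :: "'a \<Rightarrow> 'a \<Rightarrow> bool"
  assumes space: "preordered_s_regular_b_metric d s le"
begin

lemma preorder: "is_preorder le"
  using space by (simp add: preordered_s_regular_b_metric_def)

lemma regular: "le x y \<Longrightarrow> le y z \<Longrightarrow> max (d x y) (d y z) \<le> s\<^sup>2 * d x z"
  using space by (simp add: preordered_s_regular_b_metric_def)

lemma dist_nonneg: "0 \<le> d x y"
  using space by (simp add: preordered_s_regular_b_metric_def b_metric_def)

lemma dist_eq_0_iff: "d x y = 0 \<longleftrightarrow> x = y"
  using space by (simp add: preordered_s_regular_b_metric_def b_metric_def)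

lemma dist_commute: "d x y = d y x"
  using space by (simp add: preordered_s_regular_b_metric_def b_metric_def)

lemma antisymp: "antisymp le"
proof (rule antisympI)
  fix x y
  assume "le x y" "le y x"
  have "d x y \<le> s\<^sup>2 * d x x"
    using regular[OF \<open>le x y\<close> \<open>le y x\<close>] by simp
  then have "d x y = 0"
    using dist_nonneg[of x y] dist_eq_0_iff[of x x] by simp
  then show "x = y"
    using dist_eq_0_iff by simp
qed

lemma fixed_point_if_orbits_approach:
  assumes mono: "\<And>x y. strict_of le x y \<Longrightarrow> le (g x) (g y)"
    and w: "le w (g w)"
    and below: "\<And>i. i \<ge> 1 \<Longrightarrow> le ((h ^^ i) z) w"
    and lim: "(\<lambda>i. d ((g ^^ i) w) ((h ^^ i) z)) \<longlonglongrightarrow> 0"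
  shows "g w = w"
proof -
  have orbit: "le ((g ^^ i) w) ((g ^^ j) w)" if "i \<le> j" for i j
    using iterates_increasing[of le g w, OF preorder mono w that] .
  have bound: "d w (g w) \<le> s\<^sup>2 * s\<^sup>2 * d ((g ^^ i) w) ((h ^^ i) z)" if "i \<ge> 1" for i
  proof -
    have gw: "le (g w) ((g ^^ i) w)" and w_le: "le w ((g ^^ i) w)"
      using orbit[of 1 i] orbit[of 0 i] that by simp_all
    have "d w (g w) \<le> s\<^sup>2 * d w ((g ^^ i) w)"
      using regular[OF w gw] by simp
    also have "d w ((g ^^ i) w) \<le> s\<^sup>2 * d ((h ^^ i) z) ((g ^^ i) w)"
      using regular[OF below[OF that] w_le] by simp
    finally show ?thesis
      by (simp add: dist_commute mult.assoc mult_left_mono)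
  qed
  have "(\<lambda>i. s\<^sup>2 * s\<^sup>2 * d ((g ^^ i) w) ((h ^^ i) z)) \<longlonglongrightarrow> s\<^sup>2 * s\<^sup>2 * 0"
    by (intro tendsto_mult tendsto_const lim)
  then have "d w (g w) \<le> 0"
    using bound by (intro LIMSEQ_le_const) auto
  then show ?thesis
    using dist_nonneg[of w "g w"] dist_eq_0_iff by (simp add: order_antisym)
qed

lemma common_fixed_point_if_orbits_approach:
  assumes iso: "concordantly_isotone le I f"
    and w: "\<forall>\<alpha>\<in>I. le w (f \<alpha> w)"
    and below: "\<forall>i::nat. i \<ge> 1 \<longrightarrow> le ((h ^^ i) z) w"
    and lim: "\<forall>\<alpha>\<in>I. (\<lambda>i. d ((f \<alpha> ^^ i) w) ((h ^^ i) z)) \<longlonglongrightarrow> 0"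
  shows "w \<in> ComFix I f"
proof -
  have "f \<alpha> w = w" if "\<alpha> \<in> I" for \<alpha>
  proof (rule fixed_point_if_orbits_approach[where h = h and z = z])
    show "le (f \<alpha> x) (f \<alpha> y)" if "strict_of le x y" for x y
      using iso \<open>\<alpha> \<in> I\<close> that by (simp add: concordantly_isotone_def)
  qed (use that w below lim in auto)
  then show ?thesis by (simp add: ComFix_def)
qed

end

theorem theorem3p2:
  fixes d :: "'a \<Rightarrow> 'a \<Rightarrow> real" and s :: real and le :: "'a \<Rightarrow> 'a \<Rightarrow> bool"
    and x0 :: 'a and I :: "'i set" and f :: "'i \<Rightarrow> 'a \<Rightarrow> 'a"
  assumes space: "preordered_s_regular_b_metric d s le"
    and I_ne: "I \<noteq> {}"
    and iso: "concordantly_isotone le I f"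
    and x0: "\<forall>\<alpha>\<in>I. le x0 (f \<alpha> x0)"
    and chains: "\<forall>C \<in> C1star_at x0 le I f. \<exists>w.
        (\<forall>\<alpha>\<in>I. \<forall>x\<in>C. le (f \<alpha> x) w) \<and>
        (\<exists>z. \<exists>\<beta>\<in>I.
           (\<forall>\<alpha>\<in>I. \<forall>i::nat. i \<ge> 1 \<longrightarrow> le w (f \<alpha> w) \<and> le ((f \<beta> ^^ i) z) w) \<and>
           (\<forall>\<alpha>\<in>I. (\<lambda>i. d ((f \<alpha> ^^ i) w) ((f \<beta> ^^ i) z)) \<longlonglongrightarrow> 0))"
  shows "ComFix I f \<inter> upper_orbit le x0 \<noteq> {} \<and>
         (\<exists>w. maximal_in le w (ComFix I f \<inter> upper_orbit le x0))"
proof -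
  interpret s_regular_b_metric_space d s le
    by (rule s_regular_b_metric_space.intro[OF space])
  show ?thesis
  proof (rule maximal_common_fixed_point_exists[OF preorder antisymp I_ne iso x0])
    fix C
    assume "C \<in> C1star_at x0 le I f"
    then obtain w z \<beta> where ub: "\<forall>\<alpha>\<in>I. \<forall>x\<in>C. le (f \<alpha> x) w" and "\<beta> \<in> I"
      and orbits: "\<forall>\<alpha>\<in>I. \<forall>i::nat. i \<ge> 1 \<longrightarrow> le w (f \<alpha> w) \<and> le ((f \<beta> ^^ i) z) w"
      and lim: "\<forall>\<alpha>\<in>I. (\<lambda>i. d ((f \<alpha> ^^ i) w) ((f \<beta> ^^ i) z)) \<longlonglongrightarrow> 0"
      using chains by blast
    have "w \<in> ComFix I f"
    proof (rule common_fixed_point_if_orbits_approach[OF iso _ _ lim])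
      show "\<forall>\<alpha>\<in>I. le w (f \<alpha> w)" and "\<forall>i::nat. i \<ge> 1 \<longrightarrow> le ((f \<beta> ^^ i) z) w"
        using orbits \<open>\<beta> \<in> I\<close> by blast+
    qed
    with ub show "\<exists>w\<in>ComFix I f. \<forall>\<alpha>\<in>I. \<forall>x\<in>C. le (f \<alpha> x) w" by blast
  qed
qed

end
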